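(* Let $A_1,A_2\in\mathcal{C}^{\mathrm{geo}}$ and let $B=A_1\cap A_2$ be a common induced substructure of $A_1$ and $A_2$ such that $B\le A_1$. Let $D$ be the geometric amalgam of $A_1$ and $A_2$ over $B$. Then $D\in\mathcal{C}^{\mathrm{geo}}$.
   Context: Fix a natural number $n$ and a symmetric irreflexive $n$-ary relation symbol $S$; all substructures are induced substructures. For an $\{S\}$-structure $A$, a set $K\subseteq A$ with $|K|\ge n$ is a clique if every $n$-element subset of $K$ (as a tuple of distinct elements in any order) lies in $S^A$; it is a maximal clique if no clique of $A$ properly contains it. $\mathcal{M}(A)$ denotes the set of maximal cliques of $A$. For a finite set $X$ put $|X|_*=\max\{0,|X|-(n-1)\}$. For a finite $\{S\}$-structure $A$ put $s(A)=\sum_{K\in\mathcal{M}(A)}|K|_*$ and $\delta_s(A)=|A|-s(A)$. For finite $B\subseteq A$, $\delta_s(A/B)=\delta_s(A)-\delta_s(B)$. Write $B\le A$ if $\delta_s(X/B)\ge 0$ for every finite $X$ with $B\subseteq X\subseteq A$. An $\{S\}$-structure $A$ is geometric if whenever $X\subseteq A$ with $|X|\ge n$ and $\delta_s(X)<n$, there is a unique $K\in\mathcal{M}(A)$ with $X\subseteq K$. $\mathcal{C}^{\mathrm{geo}}$ is the class of finite geometric $\{S\}$-structures. For $A_1,A_2\in\mathcal{C}^{\mathrm{geo}}$ with $B=A_1\cap A_2$ a common induced substructure, the geometric amalgam of $A_1$ and $A_2$ over $B$ is the unique $\{S\}$-structure $D$ with universe $A_1\cup A_2$ whose set of maximal cliques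 is $M\cup M_1\cup M_2$, where $M=\{K_1\cup K_2: K_1\in\mathcal{M}(A_1),K_2\in\mathcal{M}(A_2),|K_1\cap K_2|\ge n-1\}$, $M_1=\{K\in\mathcal{M}(A_1):|K\cap L|<n-1\text{ for all }L\in\mathcal{M}(A_2)\}$, and $M_2=\{K\in\mathcal{M}(A_2):|K\cap L|<n-1\text{ for all }L\in\mathcal{M}(A_1)\}$ (i.e. $S^D$ is the set of $n$-tuples of distinct elements whose underlying set is contained in one of these sets). *)

theory Defs
  imports Main
begin

text \<open>An \<open>{S}\<close>-structure with universe \<open>A\<close>: since \<open>S\<close> is a symmetric irreflexive
  n-ary relation, it is represented by the set of underlying sets of its tuples,
  i.e. a set of n-element subsets of \<open>A\<close> (an n-tuple of distinct elements is in \<open>S\<close>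
  iff its underlying set is in this set).\<close>

definition struct :: "nat \<Rightarrow> 'a set \<Rightarrow> 'a set set \<Rightarrow> bool" where
  "struct n A S \<longleftrightarrow> S \<subseteq> {e. e \<subseteq> A \<and> card e = n}"

definition induced :: "'a set set \<Rightarrow> 'a set \<Rightarrow> 'a set set" where
  "induced S X = {e \<in> S. e \<subseteq> X}"

definition clique :: "nat \<Rightarrow> 'a set \<Rightarrow> 'a set set \<Rightarrow> 'a set \<Rightarrow> bool" where
  "clique n A S K \<longleftrightarrow> K \<subseteq> A \<and> finite K \<and> n \<le> card K \<and>
     (\<forall>e. e \<subseteq> K \<and> card e = n \<longrightarrow> e \<in> S)"

definition maxcliques :: "nat \<Rightarrow> 'a set \<Rightarrow> 'a set set \<Rightarrow> 'a set set" where
  "maxcliques n A S = {K. clique n A S K \<and> (\<forall>K'. clique n A S K' \<and> K \<subseteq> K' \<longrightarrow> K' = K)}"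

definition starcard :: "nat \<Rightarrow> 'a set \<Rightarrow> int" where
  "starcard n X = max 0 (int (card X) - (int n - 1))"

definition s_count :: "nat \<Rightarrow> 'a set \<Rightarrow> 'a set set \<Rightarrow> int" where
  "s_count n A S = (\<Sum>K\<in>maxcliques n A S. starcard n K)"

definition delta :: "nat \<Rightarrow> 'a set \<Rightarrow> 'a set set \<Rightarrow> int" where
  "delta n A S = int (card A) - s_count n A S"

definition delta_on :: "nat \<Rightarrow> 'a set set \<Rightarrow> 'a set \<Rightarrow> int" where
  "delta_on n S X = delta n X (induced S X)"

definition strong_sub :: "nat \<Rightarrow> 'a set \<Rightarrow> 'a set \<Rightarrow> 'a set set \<Rightarrow> bool" where
  "strong_sub n B A S \<longleftrightarrow> B \<subseteq> A \<and>
     (\<forall>X. finite X \<and> B \<subseteq> X \<and> X \<subseteq> A \<longrightarrow> delta_on n S X - delta_on n S B \<ge> 0)"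

definition geometric :: "nat \<Rightarrow> 'a set \<Rightarrow> 'a set set \<Rightarrow> bool" where
  "geometric n A S \<longleftrightarrow>
     (\<forall>X. X \<subseteq> A \<and> finite X \<and> n \<le> card X \<and> delta_on n S X < int n \<longrightarrow>
        (\<exists>!K. K \<in> maxcliques n A S \<and> X \<subseteq> K))"

definition Cgeo :: "nat \<Rightarrow> 'a set \<Rightarrow> 'a set set \<Rightarrow> bool" where
  "Cgeo n A S \<longleftrightarrow> finite A \<and> struct n A S \<and> geometric n A S"

definition amalg_M :: "nat \<Rightarrow> 'a set \<Rightarrow> 'a set set \<Rightarrow> 'a set \<Rightarrow> 'a set set \<Rightarrow> 'a set set" where
  "amalg_M n A1 S1 A2 S2 = {K1 \<union> K2 | K1 K2. K1 \<in> maxcliques n A1 S1 \<and> K2 \<in> maxcliques n A2 S2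
      \<and> int (card (K1 \<inter> K2)) \<ge> int n - 1}"

definition amalg_M1 :: "nat \<Rightarrow> 'a set \<Rightarrow> 'a set set \<Rightarrow> 'a set \<Rightarrow> 'a set set \<Rightarrow> 'a set set" where
  "amalg_M1 n A1 S1 A2 S2 = {K \<in> maxcliques n A1 S1.
      \<forall>L \<in> maxcliques n A2 S2. int (card (K \<inter> L)) < int n - 1}"

definition amalg_S :: "nat \<Rightarrow> 'a set \<Rightarrow> 'a set set \<Rightarrow> 'a set \<Rightarrow> 'a set set \<Rightarrow> 'a set set" where
  "amalg_S n A1 S1 A2 S2 = {e. e \<subseteq> A1 \<union> A2 \<and> card e = n \<and>
     (\<exists>K \<in> amalg_M n A1 S1 A2 S2 \<union> amalg_M1 n A1 S1 A2 S2 \<union> amalg_M1 n A2 S2 A1 S1. e \<subseteq> K)}"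

end

theory Submission
  imports Defs
begin

text \<open>In a finite geometric structure distinct maximal cliques meet in at most \<open>n - 2\<close> points,
  and \<open>\<delta>_s(X) = |X| - \<Sum>\<^sub>K |K \<inter> X|\<^sub>*\<close>, the sum running over the maximal cliques \<open>K\<close>. On the
  amalgam \<open>D\<close> one takes the same formula with \<open>K\<close> ranging over \<open>M \<union> M1 \<union> M2\<close>. The key claim is
  that every \<open>X \<subseteq> D\<close> with \<open>|X| \<ge> n\<close> on which this formula is at most \<open>n - 1\<close> lies in a member
  of the family. It implies that distinct members meet in at most \<open>n - 2\<close> points, hence that
  they are exactly the maximal cliques of \<open>D\<close>, that the formula computes \<open>\<delta>_s\<close> on \<open>D\<close>, and that
  \<open>D\<close> is geometric.

  For the claim, \<open>B \<le> A1\<close> gives \<open>\<delta>(X \<inter> A2) \<le> \<delta>(X)\<close>: the points of \<open>X - A2\<close> lie in \<open>A1\<close>, they do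
  not decrease \<open>\<delta>\<close> when added to \<open>B\<close> in \<open>A1\<close>, and the excess terms grow in \<open>D\<close> by at most as
  much as in \<open>A1\<close>. Adding to \<open>X\<close> a member that meets it in \<open>n\<close> points does not increase \<open>\<delta>\<close>, so
  either \<open>X\<close> contains a maximal clique \<open>K2\<close> of \<open>A2\<close>, and then \<open>X \<inter> A2 = K2\<close> by monotonicity and
  geometricity of \<open>A2\<close>, or \<open>X \<subseteq> A1\<close>. In the first case comparing \<open>\<delta>(X)\<close> with \<open>\<delta>\<close> of
  \<open>(K2 \<inter> A1) \<union> (X - A2)\<close> in \<open>A1\<close> puts \<open>X\<close> into the member \<open>K1 \<union> K2\<close>, or shows \<open>X = K2\<close>.\<close>

definition excess :: "nat \<Rightarrow> nat \<Rightarrow> int" where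
  "excess n t = max 0 (int t - (int n - 1))"

text \<open>For the maximal cliques of a structure in which distinct maximal cliques share fewer
  than \<open>n\<close> points this is \<open>\<delta>_s(X)\<close> (lemma \<open>delta_on_eq_delta_fam\<close>).\<close>
definition delta_fam :: "nat \<Rightarrow> 'a set set \<Rightarrow> 'a set \<Rightarrow> int" where
  "delta_fam n M X = int (card X) - (\<Sum>K\<in>M. excess n (card (K \<inter> X)))"

lemma starcard_eq_excess: "starcard n X = excess n (card X)"
  by (simp add: starcard_def excess_def)

lemma excess_nonneg: "0 \<le> excess n t"
  by (simp add: excess_def)

lemma excess_eq_0: "t < n \<Longrightarrow> excess n t = 0"
  by (simp add: excess_def)

lemma excess_eq: "n \<le> t + 1 \<Longrightarrow> excess n t = int t - int n + 1"
  by (simp add: excess_def)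

lemma excess_mono: "t \<le> s \<Longrightarrow> excess n t \<le> excess n s"
  by (simp add: excess_def)

lemma excess_add_le: "excess n (t + w) - excess n t \<le> int w"
  by (simp add: excess_def)

lemma excess_increment_mono: "t \<le> s \<Longrightarrow> excess n (t + w) - excess n t \<le> excess n (s + w) - excess n s"
  by (simp add: excess_def)

lemma excess_add_small: "t + 2 \<le> n \<Longrightarrow> 1 \<le> w \<Longrightarrow> excess n (t + w) \<le> int w - 1"
  by (simp add: excess_def)

lemma delta_fam_small:
  assumes "finite Y" "card Y < n"
  shows "delta_fam n M Y = int (card Y)"
proof -
  have "excess n (card (K \<inter> Y)) = 0" for K
    using card_mono[OF assms(1), of "K \<inter> Y"] assms(2) by (intro excess_eq_0) auto
  thus ?thesis unfolding delta_fam_def by simp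
qed

text \<open>The new points are paid for by the growth of the excess of \<open>V\<close> itself.\<close>
lemma delta_fam_Un_member_le:
  assumes "finite F" "V \<in> F" "finite V" "finite X" and big: "n \<le> card (V \<inter> X)"
  shows "delta_fam n F (X \<union> V) \<le> delta_fam n F X"
proof -
  let ?d = "\<lambda>K. excess n (card (K \<inter> (X \<union> V))) - excess n (card (K \<inter> X))"
  have d_nonneg: "0 \<le> ?d K" for K
  proof -
    have "card (K \<inter> X) \<le> card (K \<inter> (X \<union> V))"
      using assms(3,4) by (intro card_mono) auto
    thus ?thesis using excess_mono by simp
  qed
  have VX: "card (V \<inter> X) \<le> card V"
    using assms(3) by (simp add: card_mono)
  have "int (card V) - int (card (V \<inter> X)) = ?d V"
    using big VX by (simp add: Int_absorb2 excess_eq)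
  also have "\<dots> \<le> sum ?d F"
    by (rule member_le_sum) (use assms(1,2) d_nonneg in auto)
  finally have "int (card V) - int (card (V \<inter> X)) \<le> sum ?d F" .
  moreover have "int (card (X \<union> V)) = int (card X) + int (card V) - int (card (V \<inter> X))"
    using card_Un_Int[OF assms(4,3)] VX by (simp add: Int_commute)
  moreover have "sum ?d F = (\<Sum>K\<in>F. excess n (card (K \<inter> (X \<union> V)))) - (\<Sum>K\<in>F. excess n (card (K \<inter> X)))"
    by (rule sum_subtractf)
  ultimately show ?thesis
    unfolding delta_fam_def by linarith
qed

lemma delta_fam_Un_two_le:
  assumes "finite F" "V \<in> F" "V' \<in> F" "V \<noteq> V'" "finite V" "finite V'"
    and "n \<le> card V" "n \<le> card V'" and meet: "n \<le> card (V \<inter> V') + 1"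
  shows "delta_fam n F (V \<union> V') \<le> int n - 1"
proof -
  let ?h = "\<lambda>K. excess n (card (K \<inter> (V \<union> V')))"
  have "?h V + ?h V' = sum ?h {V, V'}"
    using assms(4) by simp
  also have "\<dots> \<le> sum ?h F"
    by (rule sum_mono2) (use assms(1-3) excess_nonneg in auto)
  finally have "?h V + ?h V' \<le> sum ?h F" .
  moreover have "?h V = int (card V) - int n + 1" "?h V' = int (card V') - int n + 1"
    using assms(7,8) by (simp_all add: Int_absorb2 excess_eq)
  moreover have "card (V \<union> V') = card V + card V' - card (V \<inter> V')"
    using card_Un_Int[OF assms(5,6)] by simp
  moreover have "card (V \<inter> V') \<le> card V"
    using assms(5) by (simp add: card_mono)
  ultimately show ?thesis
    unfolding delta_fam_def using meet by simp
qed

lemma maxclique_clique: "K \<in> maxcliques n A S \<Longrightarrow> clique n A S K"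
  by (simp add: maxcliques_def)

lemma maxclique_maximal:
  "K \<in> maxcliques n A S \<Longrightarrow> clique n A S K' \<Longrightarrow> K \<subseteq> K' \<Longrightarrow> K' = K"
  by (simp add: maxcliques_def)

lemma maxclique_antichain:
  "K \<in> maxcliques n A S \<Longrightarrow> L \<in> maxcliques n A S \<Longrightarrow> K \<subseteq> L \<Longrightarrow> K = L"
  by (metis maxclique_clique maxclique_maximal)

lemma maxclique_subset: "K \<in> maxcliques n A S \<Longrightarrow> K \<subseteq> A"
  by (simp add: maxcliques_def clique_def)

lemma maxclique_finite: "K \<in> maxcliques n A S \<Longrightarrow> finite K"
  by (simp add: maxcliques_def clique_def)

lemma maxclique_card: "K \<in> maxcliques n A S \<Longrightarrow> n \<le> card K"
  by (simp add: maxcliques_def clique_def)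

lemma finite_maxcliques: "finite A \<Longrightarrow> finite (maxcliques n A S)"
  by (rule finite_subset[of _ "Pow A"]) (auto dest: maxclique_subset)

lemma clique_subclique:
  assumes "clique n A S K" "Q \<subseteq> K" "n \<le> card Q"
  shows "clique n A S Q"
  using assms unfolding clique_def by (auto intro: finite_subset)

lemma clique_in_maxclique:
  assumes "finite A" "clique n A S Q"
  obtains K where "K \<in> maxcliques n A S" "Q \<subseteq> K"
proof -
  let ?C = "{K. clique n A S K \<and> Q \<subseteq> K}"
  have fin: "finite ?C"
    by (rule finite_subset[of _ "Pow A"]) (use assms(1) in \<open>auto simp: clique_def\<close>)
  have ne: "?C \<noteq> {}"
    using assms(2) by auto
  obtain K where "K \<in> ?C" "\<forall>K'\<in>?C. K \<subseteq> K' \<longrightarrow> K = K'"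
    using finite_has_maximal[OF fin ne] by blast
  hence "K \<in> maxcliques n A S" "Q \<subseteq> K"
    unfolding maxcliques_def by auto
  thus thesis by (rule that)
qed

lemma clique_induced_iff:
  "X \<subseteq> A \<Longrightarrow> clique n X (induced S X) Q \<longleftrightarrow> clique n A S Q \<and> Q \<subseteq> X"
  unfolding clique_def induced_def by (auto dest: subset_trans)

context
  fixes n :: nat and A X :: "'a set" and S :: "'a set set"
  assumes finite_A: "finite A" and XA: "X \<subseteq> A"
    and lin: "\<And>K L. K \<in> maxcliques n A S \<Longrightarrow> L \<in> maxcliques n A S \<Longrightarrow> K \<noteq> L \<Longrightarrow> card (K \<inter> L) < n"
begin

lemma maxclique_eq_if_trace_subset:
  assumes K: "K \<in> maxcliques n A S" "n \<le> card (K \<inter> X)" and L: "L \<in> maxcliques n A S"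
    and KXL: "K \<inter> X \<subseteq> L"
  shows "K = L"
proof (rule ccontr)
  assume "K \<noteq> L"
  hence "card (K \<inter> L) < n" using K L lin by blast
  moreover have "card (K \<inter> X) \<le> card (K \<inter> L)"
    using KXL maxclique_finite[OF K(1)] by (intro card_mono) auto
  ultimately show False using K by simp
qed

lemma clique_induced_trace:
  assumes "K \<in> maxcliques n A S" "n \<le> card (K \<inter> X)"
  shows "clique n X (induced S X) (K \<inter> X)"
proof -
  have "clique n A S (K \<inter> X)"
    using assms by (intro clique_subclique[OF maxclique_clique]) auto
  thus ?thesis using clique_induced_iff[OF XA] by blast
qed

lemma maxcliques_induced:
  "maxcliques n X (induced S X) = (\<lambda>K. K \<inter> X) ` {K \<in> maxcliques n A S. n \<le> card (K \<inter> X)}"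
proof (intro equalityI subsetI)
  fix M assume M: "M \<in> maxcliques n X (induced S X)"
  have cM: "clique n A S M" "M \<subseteq> X"
    using maxclique_clique[OF M] clique_induced_iff[OF XA] by auto
  obtain K where K: "K \<in> maxcliques n A S" "M \<subseteq> K"
    using clique_in_maxclique[OF finite_A cM(1)] .
  have "n \<le> card M"
    using cM(1) by (simp add: clique_def)
  also have "card M \<le> card (K \<inter> X)"
    using K cM maxclique_finite[OF K(1)] by (intro card_mono) auto
  finally have big: "n \<le> card (K \<inter> X)" .
  hence "K \<inter> X = M"
    using maxclique_maximal[OF M clique_induced_trace[OF K(1)]] K cM by auto
  thus "M \<in> (\<lambda>K. K \<inter> X) ` {K \<in> maxcliques n A S. n \<le> card (K \<inter> X)}"
    using K(1) big by auto
next
  fix M assume "M \<in> (\<lambda>K. K \<inter> X) ` {K \<in> maxcliques n A S. n \<le> card (K \<inter> X)}"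
  then obtain K where K: "K \<in> maxcliques n A S" "n \<le> card (K \<inter> X)" "M = K \<inter> X" by auto
  have "M' = M" if cM': "clique n X (induced S X) M'" and MM': "M \<subseteq> M'" for M'
  proof -
    have "clique n A S M'" "M' \<subseteq> X"
      using cM' clique_induced_iff[OF XA] by auto
    moreover obtain K' where "K' \<in> maxcliques n A S" "M' \<subseteq> K'"
      using clique_in_maxclique[OF finite_A calculation(1)] .
    moreover have "K = K'"
      using maxclique_eq_if_trace_subset[OF K(1,2) calculation(3)] K(3) calculation(4) MM' by blast
    ultimately show ?thesis using K MM' by auto
  qed
  thus "M \<in> maxcliques n X (induced S X)"
    unfolding maxcliques_def using clique_induced_trace[OF K(1,2)] K(3) by auto
qed

lemma inj_on_trace: "inj_on (\<lambda>K. K \<inter> X) {K \<in> maxcliques n A S. n \<le> card (K \<inter> X)}"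
proof (rule inj_onI)
  fix K L assume "K \<in> {K \<in> maxcliques n A S. n \<le> card (K \<inter> X)}"
    "L \<in> {K \<in> maxcliques n A S. n \<le> card (K \<inter> X)}" "K \<inter> X = L \<inter> X"
  thus "K = L" using maxclique_eq_if_trace_subset[of K L] by blast
qed

lemma delta_on_eq_delta_fam: "delta_on n S X = delta_fam n (maxcliques n A S) X"
proof -
  let ?B = "{K \<in> maxcliques n A S. n \<le> card (K \<inter> X)}"
  have "s_count n X (induced S X) = (\<Sum>M\<in>(\<lambda>K. K \<inter> X) ` ?B. excess n (card M))"
    unfolding s_count_def maxcliques_induced starcard_eq_excess ..
  also have "\<dots> = (\<Sum>K\<in>?B. excess n (card (K \<inter> X)))"
    by (simp add: sum.reindex[OF inj_on_trace])
  also have "\<dots> = (\<Sum>K\<in>maxcliques n A S. excess n (card (K \<inter> X)))"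
    by (rule sum.mono_neutral_left)
      (use finite_maxcliques[OF finite_A] in \<open>auto intro: ccontr simp: excess_eq_0\<close>)
  finally show ?thesis
    unfolding delta_on_def delta_def delta_fam_def by simp
qed

end

lemma big_trace_if_delta_fam_less_card:
  assumes "delta_fam n F X < int (card X)"
  obtains V where "V \<in> F" "n \<le> card (V \<inter> X)"
proof -
  have "(\<Sum>K\<in>F. excess n (card (K \<inter> X))) \<noteq> 0"
    using assms unfolding delta_fam_def by auto
  then obtain V where "V \<in> F" "excess n (card (V \<inter> X)) \<noteq> 0"
    using sum.neutral by meson
  thus thesis using that excess_eq_0 not_le by metis
qed

locale geometric_structure =
  fixes n :: nat and A :: "'a set" and S :: "'a set set"
  assumes finite_A: "finite A" and geom: "geometric n A S"
begin

abbreviation "MC \<equiv> maxcliques n A S"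

lemma finite_MC: "finite MC"
  using finite_maxcliques[OF finite_A] .

lemma delta_on_clique:
  assumes Q: "clique n A S Q"
  shows "delta_on n S Q = int n - 1"
proof -
  have QA: "Q \<subseteq> A" using Q by (simp add: clique_def)
  have cQ: "clique n Q (induced S Q) Q"
    using clique_induced_iff[OF QA] Q by auto
  have "maxcliques n Q (induced S Q) = {Q}"
  proof
    show "maxcliques n Q (induced S Q) \<subseteq> {Q}"
      using maxclique_maximal[OF _ cQ] maxclique_subset by blast
    show "{Q} \<subseteq> maxcliques n Q (induced S Q)"
      using cQ unfolding maxcliques_def by (auto simp: clique_def)
  qed
  moreover have "n \<le> card Q" using Q by (simp add: clique_def)
  ultimately show ?thesis
    unfolding delta_on_def delta_def s_count_def by (simp add: starcard_eq_excess excess_eq)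
qed

lemma maxclique_eqI:
  assumes K: "K \<in> MC" and L: "L \<in> MC" and meet: "n \<le> card (K \<inter> L)"
  shows "K = L"
proof -
  have "clique n A S (K \<inter> L)"
    using clique_subclique[OF maxclique_clique[OF K] _ meet] by auto
  hence "delta_on n S (K \<inter> L) < int n"
    using delta_on_clique by simp
  moreover have "K \<inter> L \<subseteq> A" "finite (K \<inter> L)"
    using maxclique_subset[OF K] maxclique_finite[OF K] by auto
  ultimately have "\<exists>!M. M \<in> MC \<and> K \<inter> L \<subseteq> M"
    using meet geom unfolding geometric_def by blast
  thus ?thesis using K L by blast
qed

lemma card_Int_maxcliques_less: "K \<in> MC \<Longrightarrow> L \<in> MC \<Longrightarrow> K \<noteq> L \<Longrightarrow> card (K \<inter> L) < n"
  using maxclique_eqI by (meson not_le)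

lemma delta_on_eq: "X \<subseteq> A \<Longrightarrow> delta_on n S X = delta_fam n MC X"
  using delta_on_eq_delta_fam[OF finite_A] card_Int_maxcliques_less by blast

lemma in_maxclique_if_delta_fam_le:
  assumes "X \<subseteq> A" "n \<le> card X" "delta_fam n MC X \<le> int n - 1"
  obtains K where "K \<in> MC" "X \<subseteq> K"
proof -
  have "delta_on n S X < int n"
    using delta_on_eq[OF assms(1)] assms(3) by linarith
  moreover have "finite X"
    using finite_subset[OF assms(1) finite_A] .
  ultimately have "\<exists>!K. K \<in> MC \<and> X \<subseteq> K"
    using assms(1,2) geom unfolding geometric_def by blast
  thus thesis using that by blast
qed

text \<open>Two maximal cliques sharing \<open>n - 1\<close> points would have a union of \<open>\<delta> \<le> n - 1\<close>,
  which then lies in a single maximal clique.\<close>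
lemma card_Int_maxcliques_le:
  assumes K: "K \<in> MC" and L: "L \<in> MC" and "K \<noteq> L"
  shows "card (K \<inter> L) + 2 \<le> n"
proof (rule ccontr)
  assume "\<not> ?thesis"
  hence "n \<le> card (K \<inter> L) + 1" by simp
  hence "delta_fam n MC (K \<union> L) \<le> int n - 1"
    using assms maxclique_finite[OF K] maxclique_finite[OF L]
      maxclique_card[OF K] maxclique_card[OF L]
    by (intro delta_fam_Un_two_le finite_MC)
  moreover have "K \<union> L \<subseteq> A" "n \<le> card (K \<union> L)"
    using maxclique_subset[OF K] maxclique_subset[OF L] maxclique_card[OF K]
      card_mono[of "K \<union> L" K] maxclique_finite[OF K] maxclique_finite[OF L] by auto
  ultimately obtain N where "N \<in> MC" "K \<union> L \<subseteq> N"
    using in_maxclique_if_delta_fam_le by blast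
  thus False
    using maxclique_antichain[OF K] maxclique_antichain[OF L] \<open>K \<noteq> L\<close> by blast
qed

lemma delta_fam_subset_maxclique:
  assumes K: "K \<in> MC" and Y: "Y \<subseteq> K" "n \<le> card Y"
  shows "delta_fam n MC Y = int n - 1"
proof -
  have others: "excess n (card (L \<inter> Y)) = 0" if "L \<in> MC - {K}" for L
  proof -
    have "card (L \<inter> Y) \<le> card (K \<inter> L)"
      using maxclique_finite[OF K] Y by (intro card_mono) auto
    moreover have "card (K \<inter> L) + 2 \<le> n"
      using card_Int_maxcliques_le[OF K, of L] that by auto
    ultimately show ?thesis by (intro excess_eq_0) auto
  qed
  have "(\<Sum>L\<in>MC. excess n (card (L \<inter> Y))) =
      excess n (card (K \<inter> Y)) + (\<Sum>L\<in>MC - {K}. excess n (card (L \<inter> Y)))"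
    by (rule sum.remove[OF finite_MC K])
  also have "\<dots> = int (card Y) - int n + 1"
    using others Y by (simp add: Int_absorb1 excess_eq)
  finally show ?thesis unfolding delta_fam_def by simp
qed

lemma delta_fam_ge:
  assumes "Y \<subseteq> A" "n \<le> card Y"
  shows "int n - 1 \<le> delta_fam n MC Y"
proof (rule ccontr)
  assume less: "\<not> ?thesis"
  then obtain K where "K \<in> MC" "Y \<subseteq> K"
    using in_maxclique_if_delta_fam_le[OF assms] by force
  thus False using delta_fam_subset_maxclique assms(2) less by simp
qed

end

definition amalg_fam :: "nat \<Rightarrow> 'a set \<Rightarrow> 'a set set \<Rightarrow> 'a set \<Rightarrow> 'a set set \<Rightarrow> 'a set set" where
  "amalg_fam n A1 S1 A2 S2 =
     amalg_M n A1 S1 A2 S2 \<union> amalg_M1 n A1 S1 A2 S2 \<union> amalg_M1 n A2 S2 A1 S1"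

text \<open>A maximal clique of \<open>A1\<close> together with its partner in \<open>A2\<close>, if any (it is unique,
  lemma \<open>matched_unique2\<close>).\<close>
definition amalg_ext :: "nat \<Rightarrow> 'a set \<Rightarrow> 'a set set \<Rightarrow> 'a set \<Rightarrow> 'a set" where
  "amalg_ext n A2 S2 K1 = K1 \<union> \<Union>{K2 \<in> maxcliques n A2 S2. n \<le> card (K1 \<inter> K2) + 1}"

lemma amalg_M1_iff:
  "K \<in> amalg_M1 n A1 S1 A2 S2 \<longleftrightarrow>
     K \<in> maxcliques n A1 S1 \<and> (\<forall>L\<in>maxcliques n A2 S2. \<not> n \<le> card (K \<inter> L) + 1)"
proof -
  have "(int c < int n - 1) = (\<not> n \<le> c + 1)" for c by linarith
  thus ?thesis unfolding amalg_M1_def by simp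
qed

lemma amalg_M_iff:
  "V \<in> amalg_M n A1 S1 A2 S2 \<longleftrightarrow>
     (\<exists>K1 K2. V = K1 \<union> K2 \<and> K1 \<in> maxcliques n A1 S1 \<and> K2 \<in> maxcliques n A2 S2 \<and>
        n \<le> card (K1 \<inter> K2) + 1)"
proof -
  have "(int n - 1 \<le> int c) = (n \<le> c + 1)" for c by linarith
  thus ?thesis unfolding amalg_M_def by simp
qed

lemma amalg_M_sym: "amalg_M n A1 S1 A2 S2 = amalg_M n A2 S2 A1 S1"
  unfolding set_eq_iff amalg_M_iff by (metis Int_commute Un_commute)

lemma amalg_fam_sym: "amalg_fam n A1 S1 A2 S2 = amalg_fam n A2 S2 A1 S1"
  unfolding amalg_fam_def using amalg_M_sym by blast

locale amalgam =
  fixes n :: nat and A1 A2 :: "'a set" and S1 S2 :: "'a set set"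
  assumes finite_A1: "finite A1" and finite_A2: "finite A2"
    and geometric1: "geometric n A1 S1" and geometric2: "geometric n A2 S2"
    and induced_eq: "induced S1 (A1 \<inter> A2) = induced S2 (A1 \<inter> A2)"
begin

sublocale geo1: geometric_structure n A1 S1
  using finite_A1 geometric1 by unfold_locales
sublocale geo2: geometric_structure n A2 S2
  using finite_A2 geometric2 by unfold_locales

text \<open>Here \<open>M1\<close>, \<open>M2\<close> are the maximal cliques of \<open>A1\<close>, \<open>A2\<close>; the sets \<open>M\<close>, \<open>M1\<close>, \<open>M2\<close>
  of the definition of the amalgam are \<open>MM\<close>, \<open>U1\<close>, \<open>U2\<close>.\<close>

abbreviation "M1 \<equiv> maxcliques n A1 S1"
abbreviation "M2 \<equiv> maxcliques n A2 S2"
abbreviation "U1 \<equiv> amalg_M1 n A1 S1 A2 S2"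
abbreviation "U2 \<equiv> amalg_M1 n A2 S2 A1 S1"
abbreviation "MM \<equiv> amalg_M n A1 S1 A2 S2"
abbreviation "FA \<equiv> amalg_fam n A1 S1 A2 S2"
abbreviation "ps \<equiv> amalg_ext n A2 S2"

lemma amalgam_swap: "amalgam n A2 A1 S2 S1"
  using finite_A1 finite_A2 geometric1 geometric2 induced_eq
  by unfold_locales (auto simp: Int_commute)

lemma clique_transfer:
  assumes "Q \<subseteq> A2" "clique n A1 S1 Q"
  shows "clique n A2 S2 Q"
proof -
  have QB: "Q \<subseteq> A1 \<inter> A2" using assms by (auto simp: clique_def)
  have "e \<in> S2" if "e \<subseteq> Q" "card e = n" for e
  proof -
    have "e \<in> S1" using assms(2) that by (auto simp: clique_def)
    hence "e \<in> induced S1 (A1 \<inter> A2)" using that QB by (auto simp: induced_def)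
    hence "e \<in> induced S2 (A1 \<inter> A2)" using induced_eq by simp
    thus ?thesis by (simp add: induced_def)
  qed
  moreover have "finite Q" "n \<le> card Q" using assms(2) by (simp_all add: clique_def)
  ultimately show ?thesis using assms(1) unfolding clique_def by blast
qed

lemma trace_in_maxclique2:
  assumes K1: "K1 \<in> M1" and big: "n \<le> card (K1 \<inter> A2)"
  obtains K2 where "K2 \<in> M2" "K1 \<inter> A2 \<subseteq> K2"
proof -
  have "clique n A1 S1 (K1 \<inter> A2)"
    using clique_subclique[OF maxclique_clique[OF K1] _ big] by auto
  hence "clique n A2 S2 (K1 \<inter> A2)"
    by (intro clique_transfer) auto
  thus thesis using clique_in_maxclique[OF finite_A2] that by blast
qed

lemma matched_Int_A2_subset:
  assumes K1: "K1 \<in> M1" and K2: "K2 \<in> M2" and m: "n \<le> card (K1 \<inter> K2) + 1"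
  shows "K1 \<inter> A2 \<subseteq> K2"
proof (cases "n \<le> card (K1 \<inter> A2)")
  case True
  then obtain K2' where K2': "K2' \<in> M2" "K1 \<inter> A2 \<subseteq> K2'"
    using trace_in_maxclique2[OF K1] by blast
  have "card (K1 \<inter> K2) \<le> card (K2' \<inter> K2)"
    using K2' maxclique_subset[OF K2] maxclique_finite[OF K2] by (intro card_mono) auto
  hence "K2' = K2"
    using geo2.card_Int_maxcliques_le[OF K2'(1) K2] m by fastforce
  thus ?thesis using K2' by simp
next
  case False
  have fin: "finite (K1 \<inter> A2)" using maxclique_finite[OF K1] by auto
  have sub: "K1 \<inter> K2 \<subseteq> K1 \<inter> A2" using maxclique_subset[OF K2] by auto
  have "card (K1 \<inter> K2) = card (K1 \<inter> A2)"
    using card_mono[OF fin sub] False m by linarith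
  hence "K1 \<inter> K2 = K1 \<inter> A2" using card_subset_eq[OF fin sub] by simp
  thus ?thesis by auto
qed

lemma matched_Int:
  assumes K1: "K1 \<in> M1" and K2: "K2 \<in> M2" and m: "n \<le> card (K1 \<inter> K2) + 1"
  shows "K1 \<inter> A2 = K1 \<inter> K2" "K2 \<inter> A1 = K1 \<inter> K2"
proof -
  show "K1 \<inter> A2 = K1 \<inter> K2"
    using matched_Int_A2_subset[OF assms] maxclique_subset[OF K2] by auto
  have "K2 \<inter> A1 \<subseteq> K1"
    using amalgam.matched_Int_A2_subset[OF amalgam_swap K2 K1] m by (simp add: Int_commute)
  thus "K2 \<inter> A1 = K1 \<inter> K2" using maxclique_subset[OF K1] by auto
qed

lemma matched_unique2:
  assumes K1: "K1 \<in> M1" and K2: "K2 \<in> M2" and K2': "K2' \<in> M2"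
    and m: "n \<le> card (K1 \<inter> K2) + 1" and m': "n \<le> card (K1 \<inter> K2') + 1"
  shows "K2 = K2'"
proof (rule ccontr)
  assume ne: "K2 \<noteq> K2'"
  have "K1 \<inter> K2 \<subseteq> K2 \<inter> K2'"
    using matched_Int_A2_subset[OF K1 K2' m'] maxclique_subset[OF K2] by auto
  hence "card (K1 \<inter> K2) \<le> card (K2 \<inter> K2')"
    by (intro card_mono) (use maxclique_finite[OF K2] in auto)
  thus False using geo2.card_Int_maxcliques_le[OF K2 K2' ne] m by linarith
qed

lemma matched_unique1:
  assumes K1: "K1 \<in> M1" and K1': "K1' \<in> M1" and K2: "K2 \<in> M2"
    and m: "n \<le> card (K1 \<inter> K2) + 1" and m': "n \<le> card (K1' \<inter> K2) + 1"
  shows "K1 = K1'"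
  using amalgam.matched_unique2[OF amalgam_swap K2 K1 K1'] m m' by (simp add: Int_commute)

lemma card_U1_Int_A2_less:
  assumes K1: "K1 \<in> U1" shows "card (K1 \<inter> A2) < n"
proof (rule ccontr)
  assume "\<not> card (K1 \<inter> A2) < n"
  moreover have K1': "K1 \<in> M1" "\<forall>L\<in>M2. \<not> n \<le> card (K1 \<inter> L) + 1"
    using K1 unfolding amalg_M1_iff by auto
  ultimately obtain K2 where K2: "K2 \<in> M2" "K1 \<inter> A2 \<subseteq> K2"
    using trace_in_maxclique2 not_le by blast
  have "card (K1 \<inter> A2) \<le> card (K1 \<inter> K2)"
    using K2 maxclique_finite[OF K2(1)] by (intro card_mono) auto
  thus False using K1'(2) K2(1) \<open>\<not> card (K1 \<inter> A2) < n\<close> by fastforce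
qed

lemma card_U2_Int_A1_less: "K2 \<in> U2 \<Longrightarrow> card (K2 \<inter> A1) < n"
  using amalgam.card_U1_Int_A2_less[OF amalgam_swap] .

lemma ps_matched:
  assumes K1: "K1 \<in> M1" and K2: "K2 \<in> M2" and m: "n \<le> card (K1 \<inter> K2) + 1"
  shows "ps K1 = K1 \<union> K2"
proof -
  have partner: "{K2' \<in> M2. n \<le> card (K1 \<inter> K2') + 1} = {K2}"
    using matched_unique2[OF K1 K2 _ m] K2 m by blast
  show ?thesis unfolding amalg_ext_def partner by simp
qed

lemma ps_unmatched:
  assumes "\<forall>K2\<in>M2. \<not> n \<le> card (K1 \<inter> K2) + 1"
  shows "ps K1 = K1"
proof -
  have no_partner: "{K2 \<in> M2. n \<le> card (K1 \<inter> K2) + 1} = {}" using assms by blast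
  show ?thesis unfolding amalg_ext_def no_partner by simp
qed

lemma ps_Int_A1:
  assumes K1: "K1 \<in> M1"
  shows "ps K1 \<inter> A1 = K1"
proof (cases "\<exists>K2\<in>M2. n \<le> card (K1 \<inter> K2) + 1")
  case True
  then obtain K2 where K2: "K2 \<in> M2" "n \<le> card (K1 \<inter> K2) + 1" by blast
  show ?thesis using ps_matched[OF K1 K2] matched_Int(2)[OF K1 K2] maxclique_subset[OF K1] by auto
next
  case False thus ?thesis using ps_unmatched maxclique_subset[OF K1] by auto
qed

lemma ps_superset: "K1 \<subseteq> ps K1" unfolding amalg_ext_def by auto

lemma ps_image: "ps ` M1 = MM \<union> U1"
proof
  show "ps ` M1 \<subseteq> MM \<union> U1"
  proof
    fix V assume "V \<in> ps ` M1"
    then obtain K1 where K1: "K1 \<in> M1" "V = ps K1" by auto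
    show "V \<in> MM \<union> U1"
    proof (cases "\<exists>K2\<in>M2. n \<le> card (K1 \<inter> K2) + 1")
      case True
      then obtain K2 where K2: "K2 \<in> M2" "n \<le> card (K1 \<inter> K2) + 1" by blast
      have "V \<in> MM" unfolding amalg_M_iff using ps_matched[OF K1(1) K2] K1 K2 by blast
      thus ?thesis by blast
    next
      case False
      have "V \<in> U1" unfolding amalg_M1_iff using False ps_unmatched K1 by auto
      thus ?thesis by blast
    qed
  qed
next
  show "MM \<union> U1 \<subseteq> ps ` M1"
  proof
    fix V assume "V \<in> MM \<union> U1"
    thus "V \<in> ps ` M1"
    proof
      assume "V \<in> MM"
      then obtain K1 K2 where K: "V = K1 \<union> K2" "K1 \<in> M1" "K2 \<in> M2" "n \<le> card (K1 \<inter> K2) + 1"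
        unfolding amalg_M_iff by blast
      thus ?thesis using ps_matched[OF K(2-4)] by auto
    next
      assume "V \<in> U1"
      thus ?thesis using ps_unmatched unfolding amalg_M1_iff by (metis image_eqI)
    qed
  qed
qed

lemma inj_on_ps: "inj_on ps M1"
  by (rule inj_onI) (metis ps_Int_A1)

lemma ps_image_Int_U2: "ps ` M1 \<inter> U2 = {}"
proof (rule ccontr)
  assume "ps ` M1 \<inter> U2 \<noteq> {}"
  then obtain K1 where K1: "K1 \<in> M1" "ps K1 \<in> U2" by auto
  have "ps K1 \<inter> K1 = K1" using ps_superset by auto
  hence "n \<le> card (ps K1 \<inter> K1) + 1" using maxclique_card[OF K1(1)] by simp
  thus False using K1 unfolding amalg_M1_iff by blast
qed

lemma FA_eq_ps_image_U2: "FA = ps ` M1 \<union> U2"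
  unfolding amalg_fam_def ps_image by blast

lemma U2_sub: "U2 \<subseteq> M2" unfolding amalg_M1_def by auto
lemma U1_sub: "U1 \<subseteq> M1" unfolding amalg_M1_def by auto

lemma finite_U2: "finite U2" using finite_subset[OF U2_sub geo2.finite_MC] .

lemma sum_FA: "sum h FA = (\<Sum>K1\<in>M1. h (ps K1)) + sum h U2"
proof -
  have "sum h FA = sum h (ps ` M1) + sum h U2"
    unfolding FA_eq_ps_image_U2
    by (rule sum.union_disjoint) (use geo1.finite_MC finite_U2 ps_image_Int_U2 in auto)
  also have "sum h (ps ` M1) = (\<Sum>K1\<in>M1. h (ps K1))"
    by (rule sum.reindex[OF inj_on_ps, simplified comp_def])
  finally show ?thesis .
qed

lemma delta_fam_FA_split:
  "delta_fam n FA X =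
     int (card X) - (\<Sum>K1\<in>M1. excess n (card (ps K1 \<inter> X))) - (\<Sum>K2\<in>U2. excess n (card (K2 \<inter> X)))"
  unfolding delta_fam_def sum_FA by simp

lemma delta_fam_FA_subset_A1:
  assumes Y: "Y \<subseteq> A1"
  shows "delta_fam n FA Y = delta_fam n M1 Y"
proof -
  have M1_eq: "(\<Sum>K1\<in>M1. excess n (card (ps K1 \<inter> Y))) = (\<Sum>K1\<in>M1. excess n (card (K1 \<inter> Y)))"
  proof (rule sum.cong[OF refl])
    fix K1 assume K1: "K1 \<in> M1"
    have "ps K1 \<inter> Y = ps K1 \<inter> A1 \<inter> Y" using Y by auto
    thus "excess n (card (ps K1 \<inter> Y)) = excess n (card (K1 \<inter> Y))"
      using ps_Int_A1[OF K1] by simp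
  qed
  have U2_eq: "(\<Sum>K2\<in>U2. excess n (card (K2 \<inter> Y))) = 0"
  proof (rule sum.neutral, rule ballI)
    fix K2 assume K2: "K2 \<in> U2"
    have "finite K2" using maxclique_finite U2_sub K2 by blast
    hence "card (K2 \<inter> Y) \<le> card (K2 \<inter> A1)"
      by (intro card_mono) (use Y in auto)
    thus "excess n (card (K2 \<inter> Y)) = 0"
      using card_U2_Int_A1_less[OF K2] by (intro excess_eq_0) simp
  qed
  show ?thesis unfolding delta_fam_FA_split M1_eq U2_eq unfolding delta_fam_def by simp
qed

lemma delta_fam_FA_subset_A2:
  assumes Y: "Y \<subseteq> A2"
  shows "delta_fam n FA Y = delta_fam n M2 Y"
  using amalgam.delta_fam_FA_subset_A1[OF amalgam_swap Y] amalg_fam_sym by metis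

lemma finite_ps: "K1 \<in> M1 \<Longrightarrow> finite (ps K1)"
  unfolding amalg_ext_def using maxclique_finite geo2.finite_MC by auto

lemma ps_subset: "K1 \<in> M1 \<Longrightarrow> ps K1 \<subseteq> A1 \<union> A2"
  unfolding amalg_ext_def using maxclique_subset by blast

lemma FA_props:
  assumes "V \<in> FA"
  shows "finite V" "V \<subseteq> A1 \<union> A2" "n \<le> card V"
proof -
  have "finite V \<and> V \<subseteq> A1 \<union> A2 \<and> n \<le> card V"
  proof (cases "V \<in> U2")
    case True
    thus ?thesis using U2_sub maxclique_finite maxclique_subset maxclique_card by blast
  next
    case False
    then obtain K1 where K1: "K1 \<in> M1" "V = ps K1"
      using assms FA_eq_ps_image_U2 by auto
    have "card K1 \<le> card V"
      using K1 finite_ps ps_superset by (intro card_mono) auto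
    thus ?thesis using maxclique_card[OF K1(1)] K1 finite_ps ps_subset by auto
  qed
  thus "finite V" "V \<subseteq> A1 \<union> A2" "n \<le> card V" by auto
qed

lemma finite_FA: "finite FA"
  by (rule finite_subset[of _ "Pow (A1 \<union> A2)"]) (use FA_props finite_A1 finite_A2 in auto)

lemma U2_not_subset_ps:
  assumes K1: "K1 \<in> M1" and K2: "K2 \<in> U2"
  shows "\<not> K2 \<subseteq> ps K1"
proof
  assume sub: "K2 \<subseteq> ps K1"
  show False
  proof (cases "\<exists>K2'\<in>M2. n \<le> card (K1 \<inter> K2') + 1")
    case True
    then obtain K2' where K2': "K2' \<in> M2" "n \<le> card (K1 \<inter> K2') + 1" by blast
    have "K2 \<subseteq> K2'"
      using sub ps_matched[OF K1 K2'] matched_Int_A2_subset[OF K1 K2'] U2_sub K2 maxclique_subset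
      by blast
    hence "K2 = K2'" using maxclique_antichain U2_sub K2 K2' by blast
    thus False using K2 K1 K2'(2) unfolding amalg_M1_iff by (metis Int_commute)
  next
    case False
    hence "K2 \<inter> K1 = K2" using sub ps_unmatched by auto
    hence "n \<le> card (K2 \<inter> K1) + 1" using maxclique_card U2_sub K2 by (metis le_add1 le_trans subsetD)
    thus False using K2 K1 unfolding amalg_M1_iff by blast
  qed
qed

lemma FA_antichain:
  assumes V: "V \<in> FA" and V': "V' \<in> FA" and sub: "V \<subseteq> V'"
  shows "V = V'"
proof -
  have cV: "(\<exists>K1\<in>M1. V = ps K1) \<or> V \<in> U2" using V FA_eq_ps_image_U2 by auto
  have cV': "(\<exists>K1\<in>M1. V' = ps K1) \<or> V' \<in> U2" using V' FA_eq_ps_image_U2 by auto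
  show ?thesis
  proof (cases "V \<in> U2")
    case True
    show ?thesis
    proof (cases "V' \<in> U2")
      case True thus ?thesis using \<open>V \<in> U2\<close> sub maxclique_antichain U2_sub by blast
    next
      case False
      then obtain K1 where "K1 \<in> M1" "V' = ps K1" using cV' by auto
      thus ?thesis using U2_not_subset_ps \<open>V \<in> U2\<close> sub by blast
    qed
  next
    case False
    then obtain K1 where K1: "K1 \<in> M1" "V = ps K1" using cV by auto
    show ?thesis
    proof (cases "V' \<in> U2")
      case True
      have "K1 \<subseteq> V'" using K1 ps_superset sub by blast
      hence "V' \<inter> K1 = K1" by auto
      hence "n \<le> card (V' \<inter> K1) + 1" using maxclique_card[OF K1(1)] by simp
      thus ?thesis using True K1 unfolding amalg_M1_iff by blast
    next
      case False
      then obtain K1' where K1': "K1' \<in> M1" "V' = ps K1'" using cV' by auto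
      have "K1 \<subseteq> K1'" using sub K1 K1' ps_Int_A1 by blast
      hence "K1 = K1'" using maxclique_antichain K1 K1' by blast
      thus ?thesis using K1 K1' by simp
    qed
  qed
qed

end
locale strong_amalgam = amalgam +
  assumes n_pos: "0 < n" and strong: "strong_sub n (A1 \<inter> A2) A1 S1"
begin

text \<open>Passing from \<open>X \<inter> A2\<close> to \<open>X\<close> adds the points \<open>W = X - A2 \<subseteq> A1\<close>; \<open>growth_D\<close>
  is the resulting increase of the term of \<open>K1\<close> in \<open>\<delta>\<close> of the amalgam, and \<open>growth_A1\<close>
  the increase of its term in \<open>\<delta>\<close> of \<open>A1\<close> when \<open>W\<close> is added to \<open>B = A1 \<inter> A2\<close>. The
  hypothesis \<open>B \<le> A1\<close> bounds the total of the latter by \<open>|W|\<close>.\<close>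

definition growth_D :: "'a set \<Rightarrow> 'a set \<Rightarrow> int" where
  "growth_D X K1 = excess n (card (ps K1 \<inter> X)) - excess n (card (ps K1 \<inter> (X \<inter> A2)))"

definition growth_A1 :: "'a set \<Rightarrow> 'a set \<Rightarrow> int" where
  "growth_A1 X K1 =
     excess n (card (K1 \<inter> A2) + card (K1 \<inter> (X - A2))) - excess n (card (K1 \<inter> A2))"

lemma sum_growth_A1_le:
  assumes XA: "X \<subseteq> A1 \<union> A2"
  shows "(\<Sum>K1\<in>M1. growth_A1 X K1) \<le> int (card (X - A2))"
proof -
  let ?B = "A1 \<inter> A2" and ?W = "X - A2"
  have fin: "finite ?B" "finite ?W"
    using finite_A1 finite_subset[OF XA] finite_A2 by auto
  have BW: "?B \<subseteq> ?B \<union> ?W" "?B \<union> ?W \<subseteq> A1" "finite (?B \<union> ?W)"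
    using XA fin by auto
  hence "delta_on n S1 (?B \<union> ?W) - delta_on n S1 ?B \<ge> 0"
    using strong unfolding strong_sub_def by blast
  hence "delta_fam n M1 ?B \<le> delta_fam n M1 (?B \<union> ?W)"
    using geo1.delta_on_eq[OF BW(2)] geo1.delta_on_eq[of ?B] by auto
  moreover have "card (?B \<union> ?W) = card ?B + card ?W"
    using fin by (intro card_Un_disjoint) auto
  moreover have "growth_A1 X K1 =
      excess n (card (K1 \<inter> (?B \<union> ?W))) - excess n (card (K1 \<inter> ?B))" if K1: "K1 \<in> M1" for K1
  proof -
    have "K1 \<inter> (?B \<union> ?W) = (K1 \<inter> A2) \<union> (K1 \<inter> ?W)" "K1 \<inter> ?B = K1 \<inter> A2"
      using maxclique_subset[OF K1] by auto
    moreover have "card ((K1 \<inter> A2) \<union> (K1 \<inter> ?W)) = card (K1 \<inter> A2) + card (K1 \<inter> ?W)"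
      using maxclique_finite[OF K1] by (intro card_Un_disjoint) auto
    ultimately show ?thesis unfolding growth_A1_def by simp
  qed
  hence "(\<Sum>K1\<in>M1. growth_A1 X K1) =
      (\<Sum>K1\<in>M1. excess n (card (K1 \<inter> (?B \<union> ?W)))) - (\<Sum>K1\<in>M1. excess n (card (K1 \<inter> ?B)))"
    by (simp add: sum_subtractf)
  ultimately show ?thesis unfolding delta_fam_def by linarith
qed

lemma card_ps_Int:
  assumes K1: "K1 \<in> M1" and XA: "X \<subseteq> A1 \<union> A2"
  shows "card (ps K1 \<inter> X) = card (ps K1 \<inter> (X \<inter> A2)) + card (K1 \<inter> (X - A2))"
proof -
  have "ps K1 \<inter> (X - A2) = ps K1 \<inter> A1 \<inter> (X - A2)" using XA by auto
  hence "ps K1 \<inter> (X - A2) = K1 \<inter> (X - A2)" using ps_Int_A1[OF K1] by simp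
  moreover have "ps K1 \<inter> X = (ps K1 \<inter> (X \<inter> A2)) \<union> (ps K1 \<inter> (X - A2))" by auto
  moreover have "card ((ps K1 \<inter> (X \<inter> A2)) \<union> (ps K1 \<inter> (X - A2))) =
      card (ps K1 \<inter> (X \<inter> A2)) + card (ps K1 \<inter> (X - A2))"
    using finite_ps[OF K1] by (intro card_Un_disjoint) auto
  ultimately show ?thesis by simp
qed

lemma delta_fam_FA_diff:
  assumes XA: "X \<subseteq> A1 \<union> A2"
  shows "delta_fam n FA X - delta_fam n FA (X \<inter> A2) =
    int (card (X - A2)) - (\<Sum>K1\<in>M1. growth_D X K1)"
proof -
  have "finite X" using finite_subset[OF XA] finite_A1 finite_A2 by auto
  hence "card X = card (X \<inter> A2) + card (X - A2)"
    by (rule card_Int_Diff)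
  moreover have "K2 \<inter> X = K2 \<inter> (X \<inter> A2)" if "K2 \<in> U2" for K2
    using that U2_sub maxclique_subset by blast
  hence "(\<Sum>K2\<in>U2. excess n (card (K2 \<inter> X))) = (\<Sum>K2\<in>U2. excess n (card (K2 \<inter> (X \<inter> A2))))"
    by simp
  moreover have "(\<Sum>K1\<in>M1. growth_D X K1) =
      (\<Sum>K1\<in>M1. excess n (card (ps K1 \<inter> X))) - (\<Sum>K1\<in>M1. excess n (card (ps K1 \<inter> (X \<inter> A2))))"
    unfolding growth_D_def by (rule sum_subtractf)
  ultimately show ?thesis unfolding delta_fam_FA_split by simp
qed

lemma growth_D_le_growth_A1:
  assumes K1: "K1 \<in> M1" and XA: "X \<subseteq> A1 \<union> A2"
  shows "growth_D X K1 \<le> growth_A1 X K1"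
proof (cases "\<exists>K2\<in>M2. n \<le> card (K1 \<inter> K2) + 1")
  case True
  then obtain K2 where K2: "K2 \<in> M2" "n \<le> card (K1 \<inter> K2) + 1" by blast
  hence "growth_A1 X K1 = int (card (K1 \<inter> (X - A2)))"
    unfolding growth_A1_def using matched_Int(1)[OF K1 K2] by (simp add: excess_eq)
  moreover have "growth_D X K1 \<le> int (card (K1 \<inter> (X - A2)))"
    unfolding growth_D_def card_ps_Int[OF K1 XA] by (rule excess_add_le)
  ultimately show ?thesis by simp
next
  case False
  hence "ps K1 = K1" using ps_unmatched by auto
  moreover have "card (K1 \<inter> (X \<inter> A2)) \<le> card (K1 \<inter> A2)"
    using maxclique_finite[OF K1] by (intro card_mono) auto
  ultimately show ?thesis
    unfolding growth_D_def growth_A1_def card_ps_Int[OF K1 XA] by (simp add: excess_increment_mono)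
qed

lemma growth_gap_le:
  assumes XA: "X \<subseteq> A1 \<union> A2" and K1: "K1 \<in> M1"
  shows "growth_A1 X K1 - growth_D X K1 \<le> delta_fam n FA X - delta_fam n FA (X \<inter> A2)"
proof -
  have "growth_A1 X K1 - growth_D X K1 \<le> (\<Sum>K1\<in>M1. growth_A1 X K1 - growth_D X K1)"
    by (rule member_le_sum[OF K1 _ geo1.finite_MC]) (use growth_D_le_growth_A1[OF _ XA] in auto)
  also have "\<dots> = (\<Sum>K1\<in>M1. growth_A1 X K1) - (\<Sum>K1\<in>M1. growth_D X K1)"
    by (rule sum_subtractf)
  also have "\<dots> \<le> delta_fam n FA X - delta_fam n FA (X \<inter> A2)"
    using delta_fam_FA_diff[OF XA] sum_growth_A1_le[OF XA] by linarith
  finally show ?thesis .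
qed

lemma delta_fam_FA_Int_A2_le:
  assumes XA: "X \<subseteq> A1 \<union> A2"
  shows "delta_fam n FA (X \<inter> A2) \<le> delta_fam n FA X"
proof -
  have "(\<Sum>K1\<in>M1. growth_D X K1) \<le> (\<Sum>K1\<in>M1. growth_A1 X K1)"
    by (rule sum_mono) (rule growth_D_le_growth_A1[OF _ XA])
  thus ?thesis using delta_fam_FA_diff[OF XA] sum_growth_A1_le[OF XA] by linarith
qed

text \<open>Otherwise \<open>K1\<close> grows by at least one more in \<open>A1\<close> than in \<open>D\<close>, and \<open>\<delta>(X)\<close> would exceed
  \<open>\<delta>(K2) = n - 1\<close>.\<close>
lemma Int_outside_A2_empty:
  assumes K2: "K2 \<in> M2" and XA: "X \<subseteq> A1 \<union> A2" and X2: "X \<inter> A2 = K2"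
    and F: "delta_fam n FA X \<le> int n - 1"
    and K1: "K1 \<in> M1" and K2': "K2' \<in> M2" and m: "n \<le> card (K1 \<inter> K2') + 1" and ne: "K2' \<noteq> K2"
  shows "K1 \<inter> (X - A2) = {}"
proof (rule ccontr)
  assume "K1 \<inter> (X - A2) \<noteq> {}"
  moreover have "finite X" using finite_subset[OF XA] finite_A1 finite_A2 by auto
  ultimately have w1: "1 \<le> card (K1 \<inter> (X - A2))" by (simp add: Suc_le_eq card_gt_0_iff)
  have "ps K1 \<inter> (X \<inter> A2) \<subseteq> K2' \<inter> K2"
    using ps_matched[OF K1 K2' m] X2 matched_Int_A2_subset[OF K1 K2' m] by auto
  hence "card (ps K1 \<inter> (X \<inter> A2)) \<le> card (K2' \<inter> K2)"
    by (rule card_mono[rotated]) (use maxclique_finite[OF K2] in auto)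
  hence small: "card (ps K1 \<inter> (X \<inter> A2)) + 2 \<le> n"
    using geo2.card_Int_maxcliques_le[OF K2' K2 ne] by linarith
  have "growth_D X K1 \<le> int (card (K1 \<inter> (X - A2))) - 1"
    unfolding growth_D_def card_ps_Int[OF K1 XA]
    using excess_add_small[OF small w1] excess_eq_0[of "card (ps K1 \<inter> (X \<inter> A2))" n] small
    by linarith
  moreover have "growth_A1 X K1 = int (card (K1 \<inter> (X - A2)))"
    using matched_Int(1)[OF K1 K2' m] m unfolding growth_A1_def by (simp add: excess_eq)
  ultimately have "1 \<le> delta_fam n FA X - delta_fam n FA (X \<inter> A2)"
    using growth_gap_le[OF XA K1] by linarith
  moreover have "delta_fam n FA (X \<inter> A2) = int n - 1"
    using delta_fam_FA_subset_A2[of "X \<inter> A2"] X2 maxclique_subset[OF K2]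
      geo2.delta_fam_subset_maxclique[OF K2 subset_refl maxclique_card[OF K2]] by simp
  ultimately show False using F by linarith
qed

text \<open>If \<open>K1\<close> has a partner \<open>K2' \<noteq> K2\<close>, both sides vanish: \<open>K1\<close> misses \<open>X - A2\<close>, and
  \<open>K2'\<close> meets \<open>K2\<close> in at most \<open>n - 2\<close> points.\<close>
lemma excess_ps_Int_eq_trace:
  assumes K2: "K2 \<in> M2" and XA: "X \<subseteq> A1 \<union> A2"
    and X2: "X \<inter> A2 = K2" and F: "delta_fam n FA X \<le> int n - 1"
    and K1: "K1 \<in> M1" and nm: "\<not> n \<le> card (K1 \<inter> K2) + 1"
  shows "excess n (card (ps K1 \<inter> X)) = excess n (card (K1 \<inter> ((K2 \<inter> A1) \<union> (X - A2))))"
proof (cases "\<exists>K2'\<in>M2. n \<le> card (K1 \<inter> K2') + 1")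
  case True
  then obtain K2' where K2': "K2' \<in> M2" "n \<le> card (K1 \<inter> K2') + 1" by blast
  have ne: "K2' \<noteq> K2" using nm K2' by auto
  have W0: "K1 \<inter> (X - A2) = {}"
    using Int_outside_A2_empty[OF K2 XA X2 F K1 K2' ne] .
  have K1K2': "K1 \<inter> A2 \<subseteq> K2'"
    using matched_Int_A2_subset[OF K1 K2'] .
  have K2'A2: "K2' \<subseteq> A2" using maxclique_subset[OF K2'(1)] .
  have sub1: "ps K1 \<inter> X \<subseteq> K2' \<inter> K2"
  proof
    fix x assume x: "x \<in> ps K1 \<inter> X"
    show "x \<in> K2' \<inter> K2"
    proof (cases "x \<in> A2")
      case True thus ?thesis using x X2 ps_matched[OF K1 K2'] K1K2' by auto
    next
      case False thus ?thesis using x W0 ps_matched[OF K1 K2'] K2'A2 by auto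
    qed
  qed
  have sub2: "K1 \<inter> ((K2 \<inter> A1) \<union> (X - A2)) \<subseteq> K2' \<inter> K2"
    using W0 K1K2' maxclique_subset[OF K2] by auto
  have fin: "finite (K2' \<inter> K2)" using maxclique_finite[OF K2] by auto
  have small: "card (K2' \<inter> K2) < n"
    using geo2.card_Int_maxcliques_le[OF K2'(1) K2 ne] by simp
  have "card (ps K1 \<inter> X) < n" "card (K1 \<inter> ((K2 \<inter> A1) \<union> (X - A2))) < n"
    using card_mono[OF fin sub1] card_mono[OF fin sub2] small by simp_all
  thus ?thesis by (simp add: excess_eq_0)
next
  case False
  hence "ps K1 = K1" using ps_unmatched by auto
  moreover have "K1 \<inter> X = K1 \<inter> ((K2 \<inter> A1) \<union> (X - A2))"
    using X2 maxclique_subset[OF K1] by auto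
  ultimately show ?thesis by simp
qed

lemma Int_A2_eq_if_contains_M2:
  assumes K2: "K2 \<in> M2" and sub: "K2 \<subseteq> X" and XA: "X \<subseteq> A1 \<union> A2"
    and F: "delta_fam n FA X \<le> int n - 1"
  shows "X \<inter> A2 = K2"
proof -
  have "finite X" using finite_subset[OF XA] finite_A1 finite_A2 by auto
  have "delta_fam n M2 (X \<inter> A2) \<le> int n - 1"
    using delta_fam_FA_Int_A2_le[OF XA] delta_fam_FA_subset_A2[of "X \<inter> A2"] F by auto
  moreover have "n \<le> card (X \<inter> A2)"
    using maxclique_card[OF K2] card_mono[OF _ Int_greatest[OF sub maxclique_subset[OF K2]]]
      \<open>finite X\<close> by fastforce
  ultimately obtain K2' where K2': "K2' \<in> M2" "X \<inter> A2 \<subseteq> K2'"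
    using geo2.in_maxclique_if_delta_fam_le[of "X \<inter> A2"] by auto
  hence "K2 = K2'"
    using maxclique_antichain[OF K2 K2'(1)] sub maxclique_subset[OF K2] by auto
  thus ?thesis using K2' sub maxclique_subset[OF K2] by auto
qed

lemma excess_other_M2_Int_eq_0:
  assumes "K2 \<in> M2" "K2' \<in> M2" "K2' \<noteq> K2" and X2: "X \<inter> A2 = K2"
  shows "excess n (card (K2' \<inter> X)) = 0"
proof -
  have "K2' \<inter> X = K2' \<inter> K2" using X2 maxclique_subset[OF assms(2)] by auto
  thus ?thesis using geo2.card_Int_maxcliques_le[OF assms(2,1,3)] by (simp add: excess_eq_0)
qed

lemma delta_fam_FA_matched:
  assumes K2: "K2 \<in> M2" and XA: "X \<subseteq> A1 \<union> A2" and X2: "X \<inter> A2 = K2"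
    and F: "delta_fam n FA X \<le> int n - 1"
    and Ks: "Ks \<in> M1" "n \<le> card (Ks \<inter> K2) + 1"
  shows "delta_fam n M1 ((K2 \<inter> A1) \<union> (X - A2)) = delta_fam n FA X"
proof -
  let ?W = "X - A2" and ?C = "K2 \<inter> A1"
  have fX: "finite X" using finite_subset[OF XA] finite_A1 finite_A2 by auto
  have fin: "finite K2" "finite Ks" "finite ?C" "finite ?W"
    using maxclique_finite[OF K2] maxclique_finite[OF Ks(1)] fX by auto
  have K2A2: "K2 \<subseteq> A2" using maxclique_subset[OF K2] .
  have Ceq: "?C = Ks \<inter> K2" using matched_Int(2)[OF Ks(1) K2 Ks(2)] .
  have cX: "card X = card K2 + card ?W"
    using card_Int_Diff[OF fX, of A2] X2 by simp
  have cCW: "card (?C \<union> ?W) = card ?C + card ?W"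
    using fin X2 by (intro card_Un_disjoint) auto
  have "card (ps Ks \<inter> X) = card K2 + card (Ks \<inter> ?W)"
  proof -
    have "ps Ks \<inter> X = K2 \<union> (Ks \<inter> ?W)" using ps_matched[OF Ks(1) K2 Ks(2)] X2 by auto
    thus ?thesis using card_Un_disjoint[of K2 "Ks \<inter> ?W"] fin K2A2 by auto
  qed
  hence ex1: "excess n (card (ps Ks \<inter> X)) = int (card K2) + int (card (Ks \<inter> ?W)) - int n + 1"
    using maxclique_card[OF K2] by (simp add: excess_eq)
  have "card (Ks \<inter> (?C \<union> ?W)) = card ?C + card (Ks \<inter> ?W)"
  proof -
    have "Ks \<inter> (?C \<union> ?W) = ?C \<union> (Ks \<inter> ?W)" using Ceq by auto
    thus ?thesis using card_Un_disjoint[of ?C "Ks \<inter> ?W"] fin K2A2 by auto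
  qed
  hence ex2: "excess n (card (Ks \<inter> (?C \<union> ?W))) = int (card ?C) + int (card (Ks \<inter> ?W)) - int n + 1"
    using Ceq Ks(2) by (simp add: excess_eq)
  have rest: "(\<Sum>K1\<in>M1 - {Ks}. excess n (card (ps K1 \<inter> X))) =
      (\<Sum>K1\<in>M1 - {Ks}. excess n (card (K1 \<inter> (?C \<union> ?W))))"
  proof (rule sum.cong[OF refl])
    fix K1 assume K1: "K1 \<in> M1 - {Ks}"
    hence "\<not> n \<le> card (K1 \<inter> K2) + 1"
      using matched_unique1[OF _ Ks(1) K2 _ Ks(2), of K1] by auto
    thus "excess n (card (ps K1 \<inter> X)) = excess n (card (K1 \<inter> (?C \<union> ?W)))"
      using excess_ps_Int_eq_trace[OF K2 XA X2 F] K1 by auto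
  qed
  have U2_zero: "(\<Sum>K2'\<in>U2. excess n (card (K2' \<inter> X))) = 0"
  proof (rule sum.neutral, rule ballI)
    fix K2' assume K2': "K2' \<in> U2"
    have "K2' \<noteq> K2"
      using K2' Ks unfolding amalg_M1_iff by (auto simp: Int_commute)
    thus "excess n (card (K2' \<inter> X)) = 0"
      using excess_other_M2_Int_eq_0[OF K2 _ _ X2] K2' U2_sub by blast
  qed
  have "delta_fam n M1 (?C \<union> ?W) = int (card (?C \<union> ?W)) -
      (excess n (card (Ks \<inter> (?C \<union> ?W))) + (\<Sum>K1\<in>M1 - {Ks}. excess n (card (K1 \<inter> (?C \<union> ?W)))))"
    unfolding delta_fam_def sum.remove[OF geo1.finite_MC Ks(1)] ..
  moreover have "delta_fam n FA X = int (card X) -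
      (excess n (card (ps Ks \<inter> X)) + (\<Sum>K1\<in>M1 - {Ks}. excess n (card (ps K1 \<inter> X)))) - 0"
    unfolding delta_fam_FA_split sum.remove[OF geo1.finite_MC Ks(1)] U2_zero ..
  ultimately show ?thesis using rest cX cCW ex1 ex2 by linarith
qed

lemma covered_if_matched:
  assumes K2: "K2 \<in> M2" and XA: "X \<subseteq> A1 \<union> A2" and X2: "X \<inter> A2 = K2"
    and F: "delta_fam n FA X \<le> int n - 1"
    and Ks: "Ks \<in> M1" "n \<le> card (Ks \<inter> K2) + 1"
  shows "X \<subseteq> ps Ks"
proof (cases "X - A2 = {}")
  case True
  thus ?thesis using X2 ps_matched[OF Ks(1) K2 Ks(2)] by auto
next
  case False
  let ?W = "X - A2" and ?C = "K2 \<inter> A1"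
  have fin: "finite ?W" "finite ?C"
    using finite_subset[OF XA] finite_A1 finite_A2 maxclique_finite[OF K2] by auto
  have Ceq: "?C = Ks \<inter> K2" using matched_Int(2)[OF Ks(1) K2 Ks(2)] .
  have "card (?C \<union> ?W) = card ?C + card ?W"
    using fin X2 by (intro card_Un_disjoint) auto
  moreover have "1 \<le> card ?W" using False fin(1) by (simp add: Suc_le_eq card_gt_0_iff)
  ultimately have big: "n \<le> card (?C \<union> ?W)" using Ks(2) Ceq by simp
  have "?C \<union> ?W \<subseteq> A1" using XA by auto
  moreover have "delta_fam n M1 (?C \<union> ?W) \<le> int n - 1"
    using delta_fam_FA_matched[OF assms] F by simp
  ultimately obtain K1 where K1: "K1 \<in> M1" "?C \<union> ?W \<subseteq> K1"
    using geo1.in_maxclique_if_delta_fam_le big by blast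
  have "card ?C \<le> card (K1 \<inter> Ks)"
    using K1 Ceq maxclique_finite[OF Ks(1)] by (intro card_mono) auto
  hence "K1 = Ks"
    using geo1.card_Int_maxcliques_le[OF K1(1) Ks(1)] Ceq Ks(2) by (cases "K1 = Ks") auto
  thus ?thesis using K1 ps_matched[OF Ks(1) K2 Ks(2)] X2 by auto
qed

lemma delta_fam_FA_unmatched:
  assumes K2: "K2 \<in> U2" and XA: "X \<subseteq> A1 \<union> A2" and X2: "X \<inter> A2 = K2"
    and F: "delta_fam n FA X \<le> int n - 1"
  shows "delta_fam n M1 ((K2 \<inter> A1) \<union> (X - A2)) =
    delta_fam n FA X - (int n - 1) + int (card (K2 \<inter> A1))"
proof -
  let ?W = "X - A2" and ?C = "K2 \<inter> A1"
  have K2M: "K2 \<in> M2" using K2 U2_sub by blast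
  have fX: "finite X" using finite_subset[OF XA] finite_A1 finite_A2 by auto
  have fin: "finite K2" "finite ?C" "finite ?W"
    using maxclique_finite[OF K2M] fX by auto
  have K2A2: "K2 \<subseteq> A2" using maxclique_subset[OF K2M] .
  have cX: "card X = card K2 + card ?W"
    using card_Int_Diff[OF fX, of A2] X2 by simp
  have cCW: "card (?C \<union> ?W) = card ?C + card ?W"
    using fin X2 by (intro card_Un_disjoint) auto
  have M1_eq: "(\<Sum>K1\<in>M1. excess n (card (ps K1 \<inter> X))) = (\<Sum>K1\<in>M1. excess n (card (K1 \<inter> (?C \<union> ?W))))"
  proof (rule sum.cong[OF refl])
    fix K1 assume K1: "K1 \<in> M1"
    hence "\<not> n \<le> card (K1 \<inter> K2) + 1"
      using K2 unfolding amalg_M1_iff by (auto simp: Int_commute)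
    thus "excess n (card (ps K1 \<inter> X)) = excess n (card (K1 \<inter> (?C \<union> ?W)))"
      using excess_ps_Int_eq_trace[OF K2M XA X2 F K1] by blast
  qed
  have "(\<Sum>K2'\<in>U2 - {K2}. excess n (card (K2' \<inter> X))) = 0"
    by (rule sum.neutral) (use excess_other_M2_Int_eq_0[OF K2M _ _ X2] U2_sub in blast)
  moreover have "K2 \<inter> X = K2" using X2 by auto
  ultimately have U2_eq: "(\<Sum>K2'\<in>U2. excess n (card (K2' \<inter> X))) = int (card K2) - int n + 1"
    using sum.remove[OF finite_U2 K2, of "\<lambda>K2'. excess n (card (K2' \<inter> X))"] maxclique_card[OF K2M]
    by (simp add: excess_eq)
  have "delta_fam n M1 (?C \<union> ?W) =
      int (card (?C \<union> ?W)) - (\<Sum>K1\<in>M1. excess n (card (K1 \<inter> (?C \<union> ?W))))"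
    unfolding delta_fam_def ..
  moreover have "delta_fam n FA X = int (card X) - (\<Sum>K1\<in>M1. excess n (card (K1 \<inter> (?C \<union> ?W))))
      - (int (card K2) - int n + 1)"
    unfolding delta_fam_FA_split U2_eq M1_eq ..
  ultimately show ?thesis using cX cCW by linarith
qed

text \<open>Otherwise \<open>(K2 \<inter> A1) \<union> (X - A2)\<close> would lie in a maximal clique of \<open>A1\<close> sharing
  \<open>n - 1\<close> points with \<open>K2\<close>.\<close>
lemma outside_A2_empty_if_unmatched:
  assumes K2: "K2 \<in> U2" and XA: "X \<subseteq> A1 \<union> A2" and X2: "X \<inter> A2 = K2"
    and F: "delta_fam n FA X \<le> int n - 1"
  shows "X - A2 = {}"
proof -
  let ?W = "X - A2" and ?C = "K2 \<inter> A1"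
  have K2M: "K2 \<in> M2" using K2 U2_sub by blast
  have fin: "finite ?C" "finite ?W"
    using maxclique_finite[OF K2M] finite_subset[OF XA] finite_A1 finite_A2 by auto
  have eq: "delta_fam n M1 (?C \<union> ?W) = delta_fam n FA X - (int n - 1) + int (card ?C)"
    using delta_fam_FA_unmatched[OF assms] .
  have cCW: "card (?C \<union> ?W) = card ?C + card ?W"
    using fin X2 by (intro card_Un_disjoint) auto
  show ?thesis
  proof (cases "n \<le> card (?C \<union> ?W)")
    case True
    have "card ?C < n" using card_U2_Int_A1_less[OF K2] .
    hence "delta_fam n M1 (?C \<union> ?W) \<le> int n - 1" using eq F by linarith
    moreover have "?C \<union> ?W \<subseteq> A1" using XA by auto
    ultimately obtain K1 where K1: "K1 \<in> M1" "?C \<union> ?W \<subseteq> K1"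
      using geo1.in_maxclique_if_delta_fam_le True by blast
    have "n \<le> card ?C + 1"
      using geo1.delta_fam_subset_maxclique[OF K1 True] eq F by linarith
    also have "card ?C \<le> card (K2 \<inter> K1)"
      using K1 maxclique_finite[OF K2M] by (intro card_mono) auto
    finally have "n \<le> card (K2 \<inter> K1) + 1" by simp
    thus ?thesis using K2 K1(1) unfolding amalg_M1_iff by blast
  next
    case False
    hence "delta_fam n M1 (?C \<union> ?W) = int (card (?C \<union> ?W))"
      using fin by (intro delta_fam_small) auto
    hence "card ?W = 0" using eq F cCW by linarith
    thus ?thesis using fin(2) by simp
  qed
qed

lemma covered_if_contains_M2:
  assumes K2: "K2 \<in> M2" and sub: "K2 \<subseteq> X" and XA: "X \<subseteq> A1 \<union> A2"
    and F: "delta_fam n FA X \<le> int n - 1"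
  obtains V where "V \<in> FA" "X \<subseteq> V"
proof -
  have X2: "X \<inter> A2 = K2" using Int_A2_eq_if_contains_M2[OF assms] .
  show thesis
  proof (cases "\<exists>K1\<in>M1. n \<le> card (K1 \<inter> K2) + 1")
    case True
    then obtain Ks where "Ks \<in> M1" "n \<le> card (Ks \<inter> K2) + 1" by blast
    thus thesis using that covered_if_matched[OF K2 XA X2 F] FA_eq_ps_image_U2 by blast
  next
    case False
    hence "K2 \<in> U2" using K2 unfolding amalg_M1_iff by (auto simp: Int_commute)
    moreover have "X = K2" using outside_A2_empty_if_unmatched[OF _ XA X2 F] calculation X2 by blast
    ultimately show thesis using that FA_eq_ps_image_U2 by blast
  qed
qed

lemma subset_A1_if_big_traces_in_U1:
  assumes XA: "X \<subseteq> A1 \<union> A2" and big: "n \<le> card X" and F: "delta_fam n FA X \<le> int n - 1"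
    and in_U1: "\<And>V. V \<in> FA \<Longrightarrow> n \<le> card (V \<inter> X) \<Longrightarrow> V \<in> U1"
  shows "X \<subseteq> A1"
proof -
  have fX: "finite X" using finite_subset[OF XA] finite_A1 finite_A2 by auto
  have big_A1: "V \<subseteq> A1" if "V \<in> FA" "n \<le> card (V \<inter> X)" for V
    using in_U1[OF that] U1_sub maxclique_subset by blast
  have "delta_fam n FA X < int (card X)" using big F by linarith
  then obtain V where V: "V \<in> FA" "n \<le> card (V \<inter> X)"
    by (rule big_trace_if_delta_fam_less_card)
  have "card (V \<inter> X) \<le> card (X \<inter> A1)"
    using fX big_A1[OF V] by (intro card_mono) auto
  hence cX1: "n \<le> card (X \<inter> A1)" using V(2) by simp
  have same_excess: "excess n (card (V \<inter> X)) = excess n (card (V \<inter> (X \<inter> A1)))" if "V \<in> FA" for V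
  proof (cases "n \<le> card (V \<inter> X)")
    case True
    hence "V \<inter> X = V \<inter> (X \<inter> A1)" using big_A1[OF that] by auto
    thus ?thesis by simp
  next
    case False
    moreover have "card (V \<inter> (X \<inter> A1)) \<le> card (V \<inter> X)"
      using fX by (intro card_mono) auto
    ultimately show ?thesis by (simp add: excess_eq_0)
  qed
  have "card X = card (X - A1) + card (X \<inter> A1)"
    using card_Int_Diff[OF fX, of A1] by simp
  hence "delta_fam n FA X = int (card (X - A1)) + delta_fam n FA (X \<inter> A1)"
    unfolding delta_fam_def using sum.cong[OF refl same_excess] by simp
  moreover have "int n - 1 \<le> delta_fam n FA (X \<inter> A1)"
    using geo1.delta_fam_ge[OF _ cX1] delta_fam_FA_subset_A1[of "X \<inter> A1"] by simp
  ultimately have "card (X - A1) = 0" using F by linarith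
  thus ?thesis using fX by auto
qed

text \<open>If \<open>X\<close> meets a member \<open>V\<close> of the family containing a maximal clique of \<open>A2\<close> in \<open>n\<close>
  points, then \<open>X \<union> V\<close> still has \<open>\<delta> \<le> n - 1\<close> and contains that clique; otherwise all
  big traces on \<open>X\<close> come from \<open>M1\<close> and \<open>X\<close> lies in \<open>A1\<close>.\<close>
lemma covered_if_delta_fam_le:
  assumes XA: "X \<subseteq> A1 \<union> A2" and big: "n \<le> card X" and F: "delta_fam n FA X \<le> int n - 1"
  obtains V where "V \<in> FA" "X \<subseteq> V"
proof (cases "\<exists>V\<in>FA. n \<le> card (V \<inter> X) \<and> V \<notin> U1")
  case True
  then obtain V where V: "V \<in> FA" "n \<le> card (V \<inter> X)" "V \<notin> U1" by blast
  have "V \<in> MM \<or> V \<in> U2" using V unfolding amalg_fam_def by blast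
  then obtain K2 where K2: "K2 \<in> M2" "K2 \<subseteq> V"
  proof
    assume "V \<in> MM"
    thus thesis using that unfolding amalg_M_iff by blast
  next
    assume "V \<in> U2"
    thus thesis using that U2_sub by blast
  qed
  have "finite X" using finite_subset[OF XA] finite_A1 finite_A2 by auto
  hence "delta_fam n FA (X \<union> V) \<le> delta_fam n FA X"
    using delta_fam_Un_member_le[OF finite_FA V(1) FA_props(1)[OF V(1)] _ V(2)] by blast
  hence "delta_fam n FA (X \<union> V) \<le> int n - 1" using F by linarith
  moreover have "X \<union> V \<subseteq> A1 \<union> A2" using XA FA_props(2)[OF V(1)] by auto
  moreover have "K2 \<subseteq> X \<union> V" using K2(2) by blast
  ultimately obtain V' where "V' \<in> FA" "X \<union> V \<subseteq> V'"
    using covered_if_contains_M2[OF K2(1)] by blast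
  thus thesis using that by blast
next
  case False
  hence "X \<subseteq> A1" using subset_A1_if_big_traces_in_U1[OF XA big F] by blast
  moreover have "delta_fam n M1 X \<le> int n - 1"
    using delta_fam_FA_subset_A1[OF calculation] F by simp
  ultimately obtain K1 where "K1 \<in> M1" "X \<subseteq> K1"
    using geo1.in_maxclique_if_delta_fam_le big by blast
  thus thesis using that FA_eq_ps_image_U2 ps_superset by blast
qed

lemma card_Int_FA_le:
  assumes V: "V \<in> FA" and V': "V' \<in> FA" and ne: "V \<noteq> V'"
  shows "card (V \<inter> V') + 2 \<le> n"
proof (rule ccontr)
  assume "\<not> ?thesis"
  hence "n \<le> card (V \<inter> V') + 1" by simp
  hence "delta_fam n FA (V \<union> V') \<le> int n - 1"
    using assms FA_props[OF V] FA_props[OF V'] by (intro delta_fam_Un_two_le finite_FA)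
  moreover have "V \<union> V' \<subseteq> A1 \<union> A2" using FA_props(2) V V' by auto
  moreover have "n \<le> card (V \<union> V')"
    using FA_props[OF V] FA_props[OF V'] card_mono[of "V \<union> V'" V] by auto
  ultimately obtain W where W: "W \<in> FA" "V \<union> V' \<subseteq> W"
    using covered_if_delta_fam_le by blast
  thus False using FA_antichain[OF V W(1)] FA_antichain[OF V' W(1)] ne by auto
qed

abbreviation "SD \<equiv> amalg_S n A1 S1 A2 S2"

lemma amalg_S_iff: "e \<in> SD \<longleftrightarrow> e \<subseteq> A1 \<union> A2 \<and> card e = n \<and> (\<exists>K\<in>FA. e \<subseteq> K)"
  unfolding amalg_S_def amalg_fam_def by simp

lemma clique_FA: "V \<in> FA \<Longrightarrow> clique n (A1 \<union> A2) SD V"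
  unfolding clique_def amalg_S_iff using FA_props by blast

text \<open>Two members of the family covering \<open>Q - {z}\<close> and \<open>Q - {z'}\<close> share \<open>|Q| - 2 \<ge> n - 1\<close>
  points, so they coincide.\<close>
lemma clique_covered:
  assumes "clique n (A1 \<union> A2) SD Q"
  shows "\<exists>V\<in>FA. Q \<subseteq> V"
  using assms
proof (induction "card Q" arbitrary: Q rule: less_induct)
  case less
  have fQ: "finite Q" and cQ: "n \<le> card Q"
    using less.prems by (auto simp: clique_def)
  show ?case
  proof (cases "card Q = n")
    case True
    hence "Q \<in> SD" using less.prems by (auto simp: clique_def)
    thus ?thesis unfolding amalg_S_iff by blast
  next
    case False
    hence cQ': "n + 1 \<le> card Q" using cQ by simp
    hence "1 < card Q" using n_pos by simp
    then obtain z z' where z: "z \<in> Q" "z' \<in> Q" "z \<noteq> z'"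
      using card_le_Suc0_iff_eq[OF fQ] by (auto simp: not_le[symmetric])
    have cover: "\<exists>V\<in>FA. Q - {y} \<subseteq> V" if "y \<in> Q" for y
    proof -
      have "card (Q - {y}) = card Q - 1" using that fQ by simp
      moreover have "clique n (A1 \<union> A2) SD (Q - {y})"
        by (rule clique_subclique[OF less.prems]) (use calculation cQ' in auto)
      ultimately show ?thesis using less.hyps[of "Q - {y}"] cQ' by simp
    qed
    obtain V where V: "V \<in> FA" "Q - {z} \<subseteq> V" using cover[OF z(1)] by blast
    obtain V' where V': "V' \<in> FA" "Q - {z'} \<subseteq> V'" using cover[OF z(2)] by blast
    have "V = V'"
    proof (rule ccontr)
      assume ne: "V \<noteq> V'"
      have "card (Q - {z, z'}) = card Q - 2" using z fQ by (simp add: card_Diff_subset)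
      moreover have "card (Q - {z, z'}) \<le> card (V \<inter> V')"
        using V V' FA_props(1)[OF V(1)] by (intro card_mono) auto
      ultimately show False using card_Int_FA_le[OF V(1) V'(1) ne] cQ' by linarith
    qed
    hence "Q \<subseteq> V" using V V' z by auto
    thus ?thesis using V by blast
  qed
qed

lemma maxcliques_amalg: "maxcliques n (A1 \<union> A2) SD = FA"
proof
  show "maxcliques n (A1 \<union> A2) SD \<subseteq> FA"
  proof
    fix K assume K: "K \<in> maxcliques n (A1 \<union> A2) SD"
    obtain V where V: "V \<in> FA" "K \<subseteq> V"
      using clique_covered[OF maxclique_clique[OF K]] by blast
    thus "K \<in> FA" using maxclique_maximal[OF K clique_FA[OF V(1)] V(2)] by simp
  qed
next
  show "FA \<subseteq> maxcliques n (A1 \<union> A2) SD"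
  proof
    fix V assume V: "V \<in> FA"
    have "K' = V" if cK': "clique n (A1 \<union> A2) SD K'" and VK': "V \<subseteq> K'" for K'
    proof -
      obtain V' where "V' \<in> FA" "K' \<subseteq> V'" using clique_covered[OF cK'] by blast
      thus ?thesis using FA_antichain[OF V] VK' by blast
    qed
    thus "V \<in> maxcliques n (A1 \<union> A2) SD"
      unfolding maxcliques_def using clique_FA[OF V] by blast
  qed
qed

lemma delta_on_amalg:
  assumes "X \<subseteq> A1 \<union> A2"
  shows "delta_on n SD X = delta_fam n FA X"
proof -
  have fin: "finite (A1 \<union> A2)" using finite_A1 finite_A2 by simp
  have lin: "card (K \<inter> L) < n"
    if "K \<in> maxcliques n (A1 \<union> A2) SD" "L \<in> maxcliques n (A1 \<union> A2) SD" "K \<noteq> L" for K L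
    using card_Int_FA_le that unfolding maxcliques_amalg by fastforce
  have "delta_on n SD X = delta_fam n (maxcliques n (A1 \<union> A2) SD) X"
    by (rule delta_on_eq_delta_fam[OF fin assms lin])
  thus ?thesis unfolding maxcliques_amalg .
qed

lemma geometric_amalg: "geometric n (A1 \<union> A2) SD"
  unfolding geometric_def maxcliques_amalg
proof (intro allI impI)
  fix X assume "X \<subseteq> A1 \<union> A2 \<and> finite X \<and> n \<le> card X \<and> delta_on n SD X < int n"
  hence XA: "X \<subseteq> A1 \<union> A2" and big: "n \<le> card X" and F: "delta_fam n FA X \<le> int n - 1"
    using delta_on_amalg[of X] by auto
  obtain V where V: "V \<in> FA" "X \<subseteq> V"
    using covered_if_delta_fam_le[OF XA big F] .
  have "V' = V" if "V' \<in> FA" "X \<subseteq> V'" for V'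
  proof (rule ccontr)
    assume ne: "V' \<noteq> V"
    have "card X \<le> card (V' \<inter> V)"
      using FA_props(1)[OF V(1)] V that by (intro card_mono) auto
    thus False using card_Int_FA_le[OF that(1) V(1) ne] big by linarith
  qed
  thus "\<exists>!K. K \<in> FA \<and> X \<subseteq> K" using V by blast
qed

end

text \<open>For \<open>n = 0\<close> the only possible witness of \<open>\<delta> < 0\<close> forces \<open>{} \<in> S\<close>, and then \<open>A\<close> itself
  is the unique maximal clique.\<close>
lemma geometric_0:
  assumes fA: "finite A"
  shows "geometric 0 A S"
  unfolding geometric_def
proof (intro allI impI)
  fix X assume X: "X \<subseteq> A \<and> finite X \<and> 0 \<le> card X \<and> delta_on 0 S X < int 0"
  have "{} \<in> S"
  proof (rule ccontr)
    assume "{} \<notin> S"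
    hence "maxcliques 0 X (induced S X) = {}"
      unfolding maxcliques_def clique_def induced_def by auto
    hence "delta_on 0 S X = int (card X)"
      unfolding delta_on_def delta_def s_count_def by simp
    thus False using X by simp
  qed
  hence clique_iff: "clique 0 A S K \<longleftrightarrow> K \<subseteq> A" for K
    unfolding clique_def using fA by (auto intro: finite_subset dest: finite_subset)
  have "maxcliques 0 A S = {A}"
    unfolding maxcliques_def clique_iff by auto
  thus "\<exists>!K. K \<in> maxcliques 0 A S \<and> X \<subseteq> K" using X by auto
qed

theorem mainTheorem1:
  fixes n :: nat and A1 A2 :: "'a set" and S1 S2 :: "'a set set"
  assumes "Cgeo n A1 S1" and "Cgeo n A2 S2"
    and "induced S1 (A1 \<inter> A2) = induced S2 (A1 \<inter> A2)"
    and "strong_sub n (A1 \<inter> A2) A1 S1"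
  shows "Cgeo n (A1 \<union> A2) (amalg_S n A1 S1 A2 S2)"
proof -
  have fin: "finite (A1 \<union> A2)" using assms(1,2) by (simp add: Cgeo_def)
  have "struct n (A1 \<union> A2) (amalg_S n A1 S1 A2 S2)"
    unfolding struct_def amalg_S_def by auto
  moreover have "geometric n (A1 \<union> A2) (amalg_S n A1 S1 A2 S2)"
  proof (cases "n = 0")
    case True
    thus ?thesis using geometric_0[OF fin] by simp
  next
    case False
    then interpret strong_amalgam n A1 A2 S1 S2
      using assms by unfold_locales (auto simp: Cgeo_def)
    show ?thesis by (rule geometric_amalg)
  qed
  ultimately show ?thesis unfolding Cgeo_def using fin by simp
qed

end
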